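(* Let $\mathfrak{A}$ be a commutative $\mathbb{Q}$-algebra, $A$ a set of non-commutative letters, $\mathfrak{h}^1$ the non-commutative polynomial algebra over $\mathfrak{A}$ generated by $A$, and $\mathfrak{z}\subset\mathfrak{h}^1$ the $\mathfrak{A}$-submodule spanned by $A$, equipped with a commutative (not necessarily unital) $\mathfrak{A}$-algebra product $\circ$. Let $r$ be a variable and $\mathrm{S}^r$ the map on $\mathfrak{h}^1[r]$ described in the context. Then for any $a_1,a_2,\ldots,a_n\in\mathfrak{z}$, $$\mathrm{S}^r(a_1a_2\cdots a_n)=\sum_{i=1}^n r^{i-1}(a_1\circ a_2\circ\cdots\circ a_i)\,\mathrm{S}^r(a_{i+1}\cdots a_n).$$ In particular, for any positive integer $n$ and any $a\in\mathfrak{z}$, $$\mathrm{S}^r(a^n)=\sum_{i=1}^n r^{i-1}a^{\circ i}\,\mathrm{S}^r(a^{n-i}).$$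
   Context: The product $\circ$ on $\mathfrak{z}$ gives an action of $\mathfrak{z}$ on $\mathfrak{h}^1$ (and on $\mathfrak{h}^1[r]$, $r$-linearly) defined by $\mathfrak{A}$-linearity and the rules $a\circ 1_w=0$ and $a\circ(bw)=(a\circ b)w$ for $a,b\in A$ and any word $w$, where $1_w$ is the empty word. The map $\mathrm{S}^r$ is the $\mathfrak{A}[r]$-linear map on $\mathfrak{h}^1[r]$ determined by $\mathrm{S}^r(1_w)=1_w$ and $\mathrm{S}^r(aw)=a\,\mathrm{S}^r(w)+r\,a\circ\mathrm{S}^r(w)$ for all $a\in A$ and words $w$. Juxtaposition denotes the concatenation product of $\mathfrak{h}^1$; $a^n$ is the $n$-fold concatenation power ($a^0=1_w$), and $a^{\circ i}=a\circ\cdots\circ a$ ($i$ factors). *)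

theory Defs
  imports "HOL-Computational_Algebra.Polynomial"
begin

text \<open>
  Letters are the elements of a type 'l (the alphabet A).  The coefficient
  ring is a commutative ring 'k (the Q-algebra).  An element of h1[r] is represented
  by its coefficient function on words: a map from words ('l list) to polynomials
  in r over 'k ('k poly); genuine elements are finitely supported.  An element of
  the span z of A is represented by its coefficient function 'l => 'k (finitely
  supported).  Juxtaposition (concatenation product) is hcat.
\<close>

type_synonym ('l, 'k) hr = "'l list \<Rightarrow> 'k poly"

definition fsupp :: "('a \<Rightarrow> 'b::zero) \<Rightarrow> bool" where
  "fsupp f \<longleftrightarrow> finite {x. f x \<noteq> 0}"

definition wrd :: "'l list \<Rightarrow> ('l, 'k::comm_ring_1) hr" where
  "wrd w = (\<lambda>v. if v = w then 1 else 0)"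

definition lett :: "('l \<Rightarrow> 'k::comm_ring_1) \<Rightarrow> ('l, 'k) hr" where
  "lett a = (\<lambda>v. case v of [x] \<Rightarrow> [:a x:] | _ \<Rightarrow> 0)"

definition dlt :: "'l \<Rightarrow> 'l \<Rightarrow> 'k::comm_ring_1" where
  "dlt x = (\<lambda>y. if y = x then 1 else 0)"

definition hcat :: "('l, 'k::comm_ring_1) hr \<Rightarrow> ('l, 'k) hr \<Rightarrow> ('l, 'k) hr" where
  "hcat F G = (\<lambda>w. \<Sum>i\<le>length w. F (take i w) * G (drop i w))"

definition hplus :: "('l, 'k::comm_ring_1) hr \<Rightarrow> ('l, 'k) hr \<Rightarrow> ('l, 'k) hr" where
  "hplus F G = (\<lambda>w. F w + G w)"

definition hsmult :: "'k::comm_ring_1 poly \<Rightarrow> ('l, 'k) hr \<Rightarrow> ('l, 'k) hr" where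
  "hsmult p F = (\<lambda>w. p * F w)"

definition hsum :: "('i \<Rightarrow> ('l, 'k::comm_ring_1) hr) \<Rightarrow> 'i set \<Rightarrow> ('l, 'k) hr" where
  "hsum f I = (\<lambda>w. \<Sum>i\<in>I. f i w)"

text \<open>'k[r]-linear extension of a map defined on words (for finitely supported F).\<close>
definition hlin :: "('l list \<Rightarrow> ('l, 'k::comm_ring_1) hr) \<Rightarrow> ('l, 'k) hr \<Rightarrow> ('l, 'k) hr" where
  "hlin T F = (\<lambda>v. \<Sum>w\<in>{w. F w \<noteq> 0}. F w * T w v)"

abbreviation rvar :: "'k::comm_ring_1 poly" where
  "rvar \<equiv> [:0, 1:]"

fun act_w :: "(('l \<Rightarrow> 'k) \<Rightarrow> ('l \<Rightarrow> 'k) \<Rightarrow> ('l \<Rightarrow> 'k)) \<Rightarrow> ('l \<Rightarrow> 'k::comm_ring_1)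
                \<Rightarrow> 'l list \<Rightarrow> ('l, 'k) hr" where
  "act_w circ a [] = (\<lambda>_. 0)"
| "act_w circ a (b # w) = hcat (lett (circ a (dlt b))) (wrd w)"

definition act :: "(('l \<Rightarrow> 'k) \<Rightarrow> ('l \<Rightarrow> 'k) \<Rightarrow> ('l \<Rightarrow> 'k)) \<Rightarrow> ('l \<Rightarrow> 'k::comm_ring_1)
                \<Rightarrow> ('l, 'k) hr \<Rightarrow> ('l, 'k) hr" where
  "act circ a F = hlin (act_w circ a) F"

text \<open>S^r on words: S(1) = 1, S(a w) = a S(w) + r a o S(w).\<close>
primrec S_w :: "(('l \<Rightarrow> 'k) \<Rightarrow> ('l \<Rightarrow> 'k) \<Rightarrow> ('l \<Rightarrow> 'k)) \<Rightarrow> 'l list \<Rightarrow> ('l, 'k::comm_ring_1) hr" where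
  "S_w circ [] = wrd []"
| "S_w circ (b # w) = hplus (hcat (lett (dlt b)) (S_w circ w))
                            (hsmult rvar (act circ (dlt b) (S_w circ w)))"

definition Sr :: "(('l \<Rightarrow> 'k) \<Rightarrow> ('l \<Rightarrow> 'k) \<Rightarrow> ('l \<Rightarrow> 'k)) \<Rightarrow> ('l, 'k::comm_ring_1) hr \<Rightarrow> ('l, 'k) hr" where
  "Sr circ F = hlin (S_w circ) F"

definition catprod :: "('l \<Rightarrow> 'k::comm_ring_1) list \<Rightarrow> ('l, 'k) hr" where
  "catprod as = foldr (\<lambda>a F. hcat (lett a) F) as (wrd [])"

fun circ_chain :: "(('l \<Rightarrow> 'k) \<Rightarrow> ('l \<Rightarrow> 'k) \<Rightarrow> ('l \<Rightarrow> 'k)) \<Rightarrow> ('l \<Rightarrow> 'k::zero) list \<Rightarrow> ('l \<Rightarrow> 'k)" where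
  "circ_chain circ [] = (\<lambda>_. 0)"
| "circ_chain circ [a] = a"
| "circ_chain circ (a # b # as) = circ a (circ_chain circ (b # as))"

definition comm_circ :: "(('l \<Rightarrow> 'k) \<Rightarrow> ('l \<Rightarrow> 'k) \<Rightarrow> ('l \<Rightarrow> 'k::comm_ring_1)) \<Rightarrow> bool" where
  "comm_circ circ \<longleftrightarrow>
    (\<forall>a b. fsupp a \<longrightarrow> fsupp b \<longrightarrow> fsupp (circ a b)) \<and>
    (\<forall>a b. fsupp a \<longrightarrow> fsupp b \<longrightarrow> circ a b = circ b a) \<and>
    (\<forall>a b c. fsupp a \<longrightarrow> fsupp b \<longrightarrow> fsupp c \<longrightarrow> circ (circ a b) c = circ a (circ b c)) \<and>
    (\<forall>a b c. fsupp a \<longrightarrow> fsupp b \<longrightarrow> fsupp c \<longrightarrow>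
        circ (\<lambda>x. a x + b x) c = (\<lambda>x. circ a c x + circ b c x)) \<and>
    (\<forall>k a b. fsupp a \<longrightarrow> fsupp b \<longrightarrow> circ (\<lambda>x. k * a x) b = (\<lambda>x. k * circ a b x))"

end

theory Submission
  imports Defs
begin

text \<open>
  Extending the defining recursion of \<open>S\<^sup>r\<close> linearly gives
  \<open>S\<^sup>r(c G) = c S\<^sup>r(G) + r c\<circ>S\<^sup>r(G)\<close>, and the action satisfies \<open>a\<circ>(c G) = (a\<circ>c) G\<close>.
  Applied to \<open>a\<^sub>1 (a\<^sub>2 \<cdots> a\<^sub>n)\<close>, the first term is the summand \<open>i = 1\<close>; expanding
  \<open>S\<^sup>r(a\<^sub>2 \<cdots> a\<^sub>n)\<close> by induction, the action of \<open>a\<^sub>1\<close> turns each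
  \<open>a\<^sub>2\<circ>\<cdots>\<circ>a\<^sub>i\<close> into \<open>a\<^sub>1\<circ>\<cdots>\<circ>a\<^sub>i\<close> and the factor \<open>r\<close>
  shifts the index by one.
\<close>

definition prepend :: "('l \<Rightarrow> 'k::comm_ring_1) \<Rightarrow> ('l, 'k) hr \<Rightarrow> ('l, 'k) hr" where
  "prepend c G = (\<lambda>v. case v of [] \<Rightarrow> 0 | y # u \<Rightarrow> [:c y:] * G u)"

lemma prepend_Nil [simp]: "prepend c G [] = 0"
  and prepend_Cons [simp]: "prepend c G (y # u) = [:c y:] * G u"
  by (simp_all add: prepend_def)

lemma lett_Nil [simp]: "lett c [] = 0"
  by (simp add: lett_def)

lemma lett_Cons_take: "i \<le> length u \<Longrightarrow> lett c (y # take i u) = (if i = 0 then [:c y:] else 0)"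
  by (cases "take i u") (auto simp: lett_def)

lemma hcat_lett [simp]: "hcat (lett c) G = prepend c G"
proof
  fix v show "hcat (lett c) G v = prepend c G v"
  proof (cases v)
    case Nil then show ?thesis by (simp add: hcat_def lett_def)
  next
    case (Cons y u)
    have "hcat (lett c) G v = (\<Sum>i\<le>length u. lett c (y # take i u) * G (drop i u))"
      unfolding hcat_def Cons length_Cons sum.atMost_Suc_shift by simp
    also have "\<dots> = (\<Sum>i\<le>length u. if i = 0 then [:c y:] * G u else 0)"
      by (intro sum.cong) (auto simp: lett_Cons_take)
    finally show ?thesis by (simp add: Cons)
  qed
qed

lemma catprod_Cons: "catprod (a # as) = prepend a (catprod as)"
  by (simp add: catprod_def)

lemma fsupp_wrd: "fsupp (wrd w)"
  by (simp add: fsupp_def wrd_def)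

lemma fsupp_dlt: "fsupp (dlt b)"
  by (simp add: fsupp_def dlt_def)

lemma fsupp_zero: "fsupp (\<lambda>x. 0)"
  by (simp add: fsupp_def)

lemma fsupp_mult_left: "fsupp f \<Longrightarrow> fsupp (\<lambda>x. k * f x :: 'a::mult_zero)"
  unfolding fsupp_def by (rule finite_subset[rotated]) auto

lemma fsupp_hsmult: "fsupp F \<Longrightarrow> fsupp (hsmult p F)"
  unfolding hsmult_def by (rule fsupp_mult_left)

lemma fsupp_hplus: "fsupp F \<Longrightarrow> fsupp G \<Longrightarrow> fsupp (hplus F G)"
  unfolding fsupp_def hplus_def
  by (rule finite_subset[of _ "{w. F w \<noteq> 0} \<union> {w. G w \<noteq> 0}"]) auto

lemma support_sum_subset:
  "{v. (\<Sum>u\<in>J. p u * H u v) \<noteq> (0::'a::comm_semiring_0)} \<subseteq> (\<Union>u\<in>J. {v. H u v \<noteq> 0})"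
  by (force intro: sum.neutral)

lemma fsupp_sum:
  assumes "finite J" "\<And>u. u \<in> J \<Longrightarrow> fsupp (H u)"
  shows "fsupp (\<lambda>v. \<Sum>u\<in>J. p u * H u v :: 'a::comm_semiring_0)"
  using assms unfolding fsupp_def by (blast intro: finite_subset[OF support_sum_subset])

lemma support_prepend_subset:
  "{v. prepend c G v \<noteq> 0} \<subseteq> (\<lambda>(b, u). b # u) ` ({b. c b \<noteq> 0} \<times> {u. G u \<noteq> 0})"
proof
  fix v assume "v \<in> {v. prepend c G v \<noteq> 0}"
  then show "v \<in> (\<lambda>(b, u). b # u) ` ({b. c b \<noteq> 0} \<times> {u. G u \<noteq> 0})"
    by (cases v) auto
qed

lemma fsupp_prepend: "fsupp c \<Longrightarrow> fsupp G \<Longrightarrow> fsupp (prepend c G)"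
  unfolding fsupp_def by (blast intro: finite_subset[OF support_prepend_subset])

lemma dlt_expansion: "fsupp c \<Longrightarrow> (\<lambda>x. \<Sum>b\<in>{b. c b \<noteq> 0}. c b * dlt b x) = c"
  by (auto simp: fsupp_def dlt_def if_distrib sum.delta' cong: if_cong)

lemma wrd_expansion: "fsupp G \<Longrightarrow> (\<Sum>u\<in>{u. G u \<noteq> 0}. G u * wrd u v) = G v"
  by (auto simp: fsupp_def wrd_def if_distrib sum.delta cong: if_cong)

lemma hlin_eq_sum_superset:
  assumes "finite W" "{w. F w \<noteq> 0} \<subseteq> W"
  shows "hlin T F v = (\<Sum>w\<in>W. F w * T w v)"
  unfolding hlin_def using assms by (intro sum.mono_neutral_left) auto

lemma hlin_wrd: "hlin T (wrd w) = T w"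
proof
  fix v show "hlin T (wrd w) v = T w v"
    by (subst hlin_eq_sum_superset[of "{w}"]) (auto simp: wrd_def)
qed

lemma fsupp_hlin: "fsupp F \<Longrightarrow> (\<And>w. fsupp (T w)) \<Longrightarrow> fsupp (hlin T F)"
  unfolding hlin_def by (rule fsupp_sum) (simp_all add: fsupp_def)

lemma hlin_sum_right:
  assumes "finite J" "\<And>u. u \<in> J \<Longrightarrow> fsupp (H u)"
  shows "hlin T (\<lambda>v. \<Sum>u\<in>J. p u * H u v) v = (\<Sum>u\<in>J. p u * hlin T (H u) v)"
proof -
  define W where "W = (\<Union>u\<in>J. {v. H u v \<noteq> 0})"
  have W: "finite W" using assms by (auto simp: fsupp_def W_def)
  have "hlin T (\<lambda>v. \<Sum>u\<in>J. p u * H u v) v = (\<Sum>w\<in>W. (\<Sum>u\<in>J. p u * H u w) * T w v)"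
    using W support_sum_subset unfolding W_def by (rule hlin_eq_sum_superset)
  also have "\<dots> = (\<Sum>u\<in>J. p u * (\<Sum>w\<in>W. H u w * T w v))"
    by (simp add: sum_distrib_right sum_distrib_left mult.assoc sum.swap[of _ W])
  also have "\<dots> = (\<Sum>u\<in>J. p u * hlin T (H u) v)"
    using W by (intro sum.cong refl arg_cong2[where f = "(*)"] hlin_eq_sum_superset[symmetric])
      (auto simp: W_def)
  finally show ?thesis .
qed

lemma hlin_sum_left: "hlin (\<lambda>w v. \<Sum>b\<in>I. k b * T b w v) H v = (\<Sum>b\<in>I. k b * hlin (T b) H v)"
  unfolding hlin_def by (simp add: sum_distrib_left mult.left_commute sum.swap[of _ I])

lemma hlin_prepend:
  assumes "fsupp c" "fsupp G"
  shows "hlin T (prepend c G) v =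
    (\<Sum>b\<in>{b. c b \<noteq> 0}. \<Sum>u\<in>{u. G u \<noteq> 0}. [:c b:] * G u * T (b # u) v)"
proof -
  let ?P = "{b. c b \<noteq> 0} \<times> {u. G u \<noteq> 0}"
  have "finite ?P" using assms by (simp add: fsupp_def)
  then have "hlin T (prepend c G) v = (\<Sum>w\<in>(\<lambda>(b, u). b # u) ` ?P. prepend c G w * T w v)"
    by (intro hlin_eq_sum_superset support_prepend_subset finite_imageI)
  also have "\<dots> = (\<Sum>(b, u)\<in>?P. [:c b:] * G u * T (b # u) v)"
    by (subst sum.reindex) (auto simp: inj_on_def case_prod_beta intro!: sum.cong)
  finally show ?thesis by (simp add: sum.cartesian_product)
qed

lemma sum_power_pred_Suc:
  fixes x :: "'a::comm_semiring_1"
  shows "(\<Sum>i=1..Suc m. x ^ (i - 1) * f i) = f 1 + x * (\<Sum>i=1..m. x ^ (i - 1) * f (Suc i))"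
  by (induction m) (simp_all add: algebra_simps)

lemma fsupp_catprod: "\<forall>a\<in>set as. fsupp a \<Longrightarrow> fsupp (catprod as)"
  by (induction as) (simp_all add: catprod_def fsupp_wrd fsupp_prepend)

lemma circ_chain_Cons: "as \<noteq> [] \<Longrightarrow> circ_chain circ (a # as) = circ a (circ_chain circ as)"
  by (cases as) simp_all

lemma act_Nil: "act circ a H [] = 0"
proof -
  have "act_w circ a w [] = 0" for w by (cases w) simp_all
  then show ?thesis by (simp add: act_def hlin_def)
qed

lemma act_wrd_Nil: "act circ a (wrd []) = (\<lambda>_. 0)"
  by (simp add: act_def hlin_wrd)

lemma Sr_wrd_Nil: "Sr circ (wrd []) = wrd []"
  by (simp add: Sr_def hlin_wrd)

lemma act_sum_right:
  assumes "finite J" "\<And>u. u \<in> J \<Longrightarrow> fsupp (H u)"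
  shows "act circ a (\<lambda>v. \<Sum>u\<in>J. p u * H u v) v = (\<Sum>u\<in>J. p u * act circ a (H u) v)"
  unfolding act_def using assms by (rule hlin_sum_right)

lemma prepend_hlin:
  assumes "fsupp c"
  shows "prepend c (hlin T G) v =
    (\<Sum>b\<in>{b. c b \<noteq> 0}. \<Sum>u\<in>{u. G u \<noteq> 0}. [:c b:] * G u * prepend (dlt b) (T u) v)"
proof (cases v)
  case Nil then show ?thesis by simp
next
  case (Cons y v')
  have "(\<Sum>b\<in>{b. c b \<noteq> 0}. \<Sum>u\<in>{u. G u \<noteq> 0}. [:c b:] * G u * prepend (dlt b) (T u) v)
      = (\<Sum>b\<in>{b. c b \<noteq> 0}. [:c b * dlt b y:]) * (\<Sum>u\<in>{u. G u \<noteq> 0}. G u * T u v')"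
    by (simp add: Cons sum_product mult_ac) (rule sum.swap)
  also have "\<dots> = [:c y:] * hlin T G v'"
    using fun_cong[OF dlt_expansion[OF assms], of y] by (simp add: sum_to_poly hlin_def)
  finally show ?thesis by (simp add: Cons)
qed

context
  fixes circ :: "('l \<Rightarrow> 'k::comm_ring_1) \<Rightarrow> ('l \<Rightarrow> 'k) \<Rightarrow> ('l \<Rightarrow> 'k)"
  assumes circ: "comm_circ circ"
begin

lemma fsupp_circ: "fsupp a \<Longrightarrow> fsupp b \<Longrightarrow> fsupp (circ a b)"
  and circ_commute: "fsupp a \<Longrightarrow> fsupp b \<Longrightarrow> circ a b = circ b a"
  and circ_add_left: "fsupp a \<Longrightarrow> fsupp b \<Longrightarrow> fsupp c \<Longrightarrow>
    circ (\<lambda>x. a x + b x) c = (\<lambda>x. circ a c x + circ b c x)"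
  and circ_mult_left: "fsupp a \<Longrightarrow> fsupp b \<Longrightarrow> circ (\<lambda>x. k * a x) b = (\<lambda>x. k * circ a b x)"
  using circ unfolding comm_circ_def by blast+

lemma circ_sum_left:
  assumes "finite I" "\<And>i. i \<in> I \<Longrightarrow> fsupp (f i)" "fsupp b"
  shows "circ (\<lambda>x. \<Sum>i\<in>I. k i * f i x) b = (\<lambda>x. \<Sum>i\<in>I. k i * circ (f i) b x)"
  using assms
proof (induction I rule: finite_induct)
  case empty
  then show ?case using circ_mult_left[of "\<lambda>x. 0" b 0] by (simp add: fsupp_zero)
next
  case (insert j I)
  have "fsupp (\<lambda>x. \<Sum>i\<in>I. k i * f i x)"
    using insert by (intro fsupp_sum) auto
  then show ?case
    using insert by (simp add: circ_add_left fsupp_mult_left circ_mult_left)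
qed

lemma circ_sum_dlt_right:
  assumes "fsupp a" "fsupp c"
  shows "circ a c y = (\<Sum>b\<in>{b. c b \<noteq> 0}. c b * circ a (dlt b) y)"
proof -
  have "circ a c = circ (\<lambda>x. \<Sum>b\<in>{b. c b \<noteq> 0}. c b * dlt b x) a"
    using assms by (simp add: circ_commute dlt_expansion)
  also have "\<dots> = (\<lambda>x. \<Sum>b\<in>{b. c b \<noteq> 0}. c b * circ (dlt b) a x)"
    using assms by (intro circ_sum_left) (auto simp: fsupp_def fsupp_dlt[unfolded fsupp_def])
  finally show ?thesis using assms by (simp add: circ_commute fsupp_dlt)
qed

lemma fsupp_circ_chain: "\<forall>a\<in>set as. fsupp a \<Longrightarrow> fsupp (circ_chain circ as)"
proof (induction as)
  case Nil then show ?case by (simp add: fsupp_zero)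
next
  case (Cons a as) then show ?case by (cases as) (simp_all add: fsupp_circ)
qed

lemma fsupp_act_w: "fsupp a \<Longrightarrow> fsupp (act_w circ a w)"
  by (cases w) (simp_all add: fsupp_zero fsupp_prepend fsupp_circ fsupp_dlt fsupp_wrd)

lemma fsupp_act: "fsupp a \<Longrightarrow> fsupp H \<Longrightarrow> fsupp (act circ a H)"
  unfolding act_def by (intro fsupp_hlin fsupp_act_w)

lemma fsupp_S_w: "fsupp (S_w circ w)"
  by (induction w)
    (simp_all add: fsupp_wrd fsupp_hplus fsupp_hsmult fsupp_act fsupp_prepend fsupp_dlt)

lemma fsupp_Sr: "fsupp F \<Longrightarrow> fsupp (Sr circ F)"
  unfolding Sr_def by (intro fsupp_hlin fsupp_S_w)

lemma act_sum_left:
  assumes "finite I" "\<And>i. i \<in> I \<Longrightarrow> fsupp (f i)"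
  shows "act circ (\<lambda>x. \<Sum>i\<in>I. k i * f i x) H v = (\<Sum>i\<in>I. [:k i:] * act circ (f i) H v)"
proof -
  have "act_w circ (\<lambda>x. \<Sum>i\<in>I. k i * f i x) w v = (\<Sum>i\<in>I. [:k i:] * act_w circ (f i) w v)" for w v
  proof (cases w)
    case (Cons b w')
    have "circ (\<lambda>x. \<Sum>i\<in>I. k i * f i x) (dlt b) = (\<lambda>x. \<Sum>i\<in>I. k i * circ (f i) (dlt b) x)"
      using assms by (intro circ_sum_left fsupp_dlt)
    then show ?thesis
      by (cases v) (simp_all add: Cons smult_sum mult.commute)
  qed simp
  then have "act_w circ (\<lambda>x. \<Sum>i\<in>I. k i * f i x) = (\<lambda>w v. \<Sum>i\<in>I. [:k i:] * act_w circ (f i) w v)"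
    by blast
  then show ?thesis unfolding act_def by (simp only: hlin_sum_left)
qed

lemma act_prepend:
  assumes "fsupp a" "fsupp c" "fsupp G"
  shows "act circ a (prepend c G) = prepend (circ a c) G"
proof
  fix v
  show "act circ a (prepend c G) v = prepend (circ a c) G v"
  proof (cases v)
    case Nil then show ?thesis by (simp add: act_Nil)
  next
    case (Cons y v')
    have "act circ a (prepend c G) v =
        (\<Sum>b\<in>{b. c b \<noteq> 0}. \<Sum>u\<in>{u. G u \<noteq> 0}. [:c b:] * G u * prepend (circ a (dlt b)) (wrd u) v)"
      unfolding act_def using assms(2,3) by (simp add: hlin_prepend)
    also have "\<dots> = (\<Sum>b\<in>{b. c b \<noteq> 0}. [:c b * circ a (dlt b) y:]) * (\<Sum>u\<in>{u. G u \<noteq> 0}. G u * wrd u v')"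
      by (simp add: Cons sum_product mult_ac) (rule sum.swap)
    also have "\<dots> = [:circ a c y:] * G v'"
      using assms by (simp add: sum_to_poly wrd_expansion circ_sum_dlt_right)
    finally show ?thesis by (simp add: Cons)
  qed
qed

lemma act_hlin:
  assumes "fsupp c" "fsupp G" "\<And>u. fsupp (T u)"
  shows "act circ c (hlin T G) v =
    (\<Sum>b\<in>{b. c b \<noteq> 0}. \<Sum>u\<in>{u. G u \<noteq> 0}. [:c b:] * G u * act circ (dlt b) (T u) v)"
proof -
  have "act circ c (hlin T G) v = (\<Sum>b\<in>{b. c b \<noteq> 0}. [:c b:] * act circ (dlt b) (hlin T G) v)"
    using act_sum_left[of "{b. c b \<noteq> 0}" dlt c "hlin T G" v] assms(1)
    by (simp add: dlt_expansion fsupp_def fsupp_dlt[unfolded fsupp_def])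
  also have "\<dots> = (\<Sum>b\<in>{b. c b \<noteq> 0}. [:c b:] * (\<Sum>u\<in>{u. G u \<noteq> 0}. G u * act circ (dlt b) (T u) v))"
    using assms(2,3) unfolding hlin_def by (subst act_sum_right) (auto simp: fsupp_def)
  finally show ?thesis by (simp add: sum_distrib_left mult.assoc)
qed

lemma Sr_prepend:
  assumes "fsupp c" "fsupp G"
  shows "Sr circ (prepend c G) = hplus (prepend c (Sr circ G)) (hsmult rvar (act circ c (Sr circ G)))"
proof
  fix v
  have "Sr circ (prepend c G) v =
      (\<Sum>b\<in>{b. c b \<noteq> 0}. \<Sum>u\<in>{u. G u \<noteq> 0}. [:c b:] * G u * S_w circ (b # u) v)"
    unfolding Sr_def using assms by (rule hlin_prepend)
  also have "\<dots> =
      (\<Sum>b\<in>{b. c b \<noteq> 0}. \<Sum>u\<in>{u. G u \<noteq> 0}. [:c b:] * G u * prepend (dlt b) (S_w circ u) v) +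
      rvar * (\<Sum>b\<in>{b. c b \<noteq> 0}. \<Sum>u\<in>{u. G u \<noteq> 0}. [:c b:] * G u * act circ (dlt b) (S_w circ u) v)"
    by (simp add: hplus_def hsmult_def sum.distrib sum_distrib_left algebra_simps)
  also have "\<dots> = prepend c (Sr circ G) v + rvar * act circ c (Sr circ G) v"
    unfolding Sr_def using assms by (simp add: prepend_hlin act_hlin fsupp_S_w)
  finally show "Sr circ (prepend c G) v = hplus (prepend c (Sr circ G)) (hsmult rvar (act circ c (Sr circ G))) v"
    by (simp add: hplus_def hsmult_def)
qed

lemma act_sum_prepend_circ_chain:
  assumes "fsupp a" "\<forall>b\<in>set as. fsupp b" "\<And>i. fsupp (Y i)"
  shows "act circ a (\<lambda>v. \<Sum>i=1..length as. rvar ^ (i - 1) * prepend (circ_chain circ (take i as)) (Y i) v) v =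
    (\<Sum>i=1..length as. rvar ^ (i - 1) * prepend (circ_chain circ (a # take i as)) (Y i) v)"
proof -
  have fsupp_chain: "fsupp (circ_chain circ (take i as))" for i
    using assms(2) by (intro fsupp_circ_chain) (auto dest: in_set_takeD)
  have "act circ a (prepend (circ_chain circ (take i as)) (Y i)) =
      prepend (circ_chain circ (a # take i as)) (Y i)" if "i \<in> {1..length as}" for i
  proof -
    from that have "take i as \<noteq> []" by auto
    with assms(1,3) fsupp_chain show ?thesis by (simp add: act_prepend circ_chain_Cons)
  qed
  then show ?thesis
    using assms(1,3) by (simp add: act_sum_right fsupp_prepend fsupp_chain)
qed

lemma Sr_catprod_expansion:
  assumes "as \<noteq> []" "\<forall>a\<in>set as. fsupp a"
  shows "Sr circ (catprod as) =
    hsum (\<lambda>i. hsmult (rvar ^ (i - 1))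
                (prepend (circ_chain circ (take i as)) (Sr circ (catprod (drop i as)))))
         {1..length as}"
  using assms
proof (induction as)
  case Nil then show ?case by simp
next
  case (Cons a as)
  have fsupp_a: "fsupp a" and fsupp_as: "\<forall>a\<in>set as. fsupp a" using Cons.prems by auto
  define T where "T i = prepend (circ_chain circ (take i (a # as))) (Sr circ (catprod (drop i (a # as))))" for i
  have Sr_Cons: "Sr circ (catprod (a # as)) v = T 1 v + rvar * act circ a (Sr circ (catprod as)) v" for v
    using fsupp_a fsupp_as
    by (simp add: T_def catprod_Cons Sr_prepend fsupp_catprod hplus_def hsmult_def)
  have act_tail: "act circ a (Sr circ (catprod as)) v = (\<Sum>i=1..length as. rvar ^ (i - 1) * T (Suc i) v)" for v
  proof (cases "as = []")
    case True then show ?thesis by (simp add: catprod_def Sr_wrd_Nil act_wrd_Nil)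
  next
    case False
    have "fsupp (Sr circ (catprod (drop i as)))" for i
      using fsupp_as by (intro fsupp_Sr fsupp_catprod) (auto dest: in_set_dropD)
    then show ?thesis
      using Cons.IH[OF False fsupp_as] act_sum_prepend_circ_chain[OF fsupp_a fsupp_as]
      by (simp add: T_def hsum_def hsmult_def)
  qed
  have "Sr circ (catprod (a # as)) v = (\<Sum>i=1..Suc (length as). rvar ^ (i - 1) * T i v)" for v
    by (simp only: Sr_Cons act_tail sum_power_pred_Suc)
  then show ?case
    by (simp add: T_def hsum_def hsmult_def fun_eq_iff)
qed

lemma Sr_catprod_replicate_expansion:
  assumes "n > 0" "fsupp a"
  shows "Sr circ (catprod (replicate n a)) =
    hsum (\<lambda>i. hsmult (rvar ^ (i - 1))
                (prepend (circ_chain circ (replicate i a)) (Sr circ (catprod (replicate (n - i) a)))))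
         {1..n}"
proof -
  have "Sr circ (catprod (replicate n a)) =
    hsum (\<lambda>i. hsmult (rvar ^ (i - 1)) (prepend (circ_chain circ (take i (replicate n a)))
                                          (Sr circ (catprod (drop i (replicate n a))))))
         {1..length (replicate n a)}"
    using assms by (intro Sr_catprod_expansion) auto
  also have "\<dots> = hsum (\<lambda>i. hsmult (rvar ^ (i - 1))
                (prepend (circ_chain circ (replicate i a)) (Sr circ (catprod (replicate (n - i) a)))))
         {1..n}"
    unfolding hsum_def by (intro ext sum.cong) (auto simp: min_def)
  finally show ?thesis .
qed

end

theorem lemma2p2:
  fixes circ :: "('l \<Rightarrow> 'k::comm_ring_1) \<Rightarrow> ('l \<Rightarrow> 'k) \<Rightarrow> ('l \<Rightarrow> 'k)"
  assumes Qalg: "\<And>n::nat. n \<noteq> 0 \<Longrightarrow> (of_nat n :: 'k) dvd 1"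
    and circ: "comm_circ circ"
  shows "(\<forall>as :: ('l \<Rightarrow> 'k) list. as \<noteq> [] \<longrightarrow> (\<forall>a\<in>set as. fsupp a) \<longrightarrow>
            Sr circ (catprod as) =
            hsum (\<lambda>i. hsmult (rvar ^ (i - 1))
                        (hcat (lett (circ_chain circ (take i as)))
                              (Sr circ (catprod (drop i as)))))
                 {1..length as})
       \<and> (\<forall>(a :: 'l \<Rightarrow> 'k) (n::nat). n > 0 \<longrightarrow> fsupp a \<longrightarrow>
            Sr circ (catprod (replicate n a)) =
            hsum (\<lambda>i. hsmult (rvar ^ (i - 1))
                        (hcat (lett (circ_chain circ (replicate i a)))
                              (Sr circ (catprod (replicate (n - i) a)))))
                 {1..n})"
  using Sr_catprod_expansion[OF circ] Sr_catprod_replicate_expansion[OF circ] by simp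

end
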